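(* Let $R$ be a (not necessarily commutative) local ring with maximal ideal $\mathfrak{m}$, separated and complete for the $\mathfrak{m}$-adic topology, $\sigma:R\to R$ a ring automorphism with $\sigma(\mathfrak{m})=\mathfrak{m}$, and $\delta$ a $\sigma$-derivation with $\delta(R)\subseteq\mathfrak{m}$, $\delta(\mathfrak{m})\subseteq\mathfrak{m}^2$. Let $A=R[[X;\sigma,\delta]]$ and let $f\in A$ have finite reduced order. Then $f$ can be expressed uniquely as $f=\epsilon F$ with $\epsilon$ a unit of $A$ and $F$ a distinguished polynomial.
   Context: A $\sigma$-derivation is an additive map with $\delta(rs)=\delta(r)s+\sigma(r)\delta(s)$. $R[[X;\sigma,\delta]]$ consists of formal series $\sum r_nX^n$ with multiplication determined by $Xr=\sigma(r)X+\delta(r)$; it contains the skew polynomial ring $R[X;\sigma,\delta]$. For $f=\sum a_iX^i$, $\mathrm{ord}^{red}(f)=\min\{i:a_i\in R^\times\}$. A distinguished (Weierstrass) polynomial is a monic polynomial $X^s+a_{s-1}X^{s-1}+\dots+a_1X+a_0\in R[X;\sigma,\delta]$ with all $a_i\in\mathfrak{m}$. *)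

theory Defs
  imports Main
begin

text \<open>The ring R is the whole type 'a (class ring_1, not necessarily commutative).
Skew power series sum r_n X^n are represented by their coefficient sequences nat => 'a.\<close>

definition unit_r :: "'a::ring_1 \<Rightarrow> bool" where
  "unit_r x \<longleftrightarrow> (\<exists>y. x * y = 1 \<and> y * x = 1)"

definition mid :: "'a::ring_1 set" where
  "mid = {x. \<not> unit_r x}"

text \<open>Local ring: 1 \<noteq> 0 and the non-units form a two-sided ideal (then it is the unique maximal ideal).\<close>
definition local_ring :: "'a::ring_1 itself \<Rightarrow> bool" where
  "local_ring _ \<longleftrightarrow> (0::'a) \<noteq> 1 \<and>
     (\<forall>x\<in>(mid::'a set). \<forall>y\<in>mid. x + y \<in> mid) \<and>
     (\<forall>x\<in>(mid::'a set). \<forall>r. r * x \<in> mid \<and> x * r \<in> mid)"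

inductive in_mpow :: "nat \<Rightarrow> 'a::ring_1 \<Rightarrow> bool" where
  mpow_0: "in_mpow 0 x"
| mpow_prod: "a \<in> mid \<Longrightarrow> in_mpow k b \<Longrightarrow> in_mpow (Suc k) (a * b)"
| mpow_zero: "in_mpow (Suc k) 0"
| mpow_add: "in_mpow (Suc k) x \<Longrightarrow> in_mpow (Suc k) y \<Longrightarrow> in_mpow (Suc k) (x + y)"

definition mpow :: "nat \<Rightarrow> 'a::ring_1 set" where
  "mpow k = {x. in_mpow k x}"

definition madic_lim :: "(nat \<Rightarrow> 'a::ring_1) \<Rightarrow> 'a \<Rightarrow> bool" where
  "madic_lim s L \<longleftrightarrow> (\<forall>k. \<exists>N. \<forall>n\<ge>N. s n - L \<in> mpow k)"

definition madic_cauchy :: "(nat \<Rightarrow> 'a::ring_1) \<Rightarrow> bool" where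
  "madic_cauchy s \<longleftrightarrow> (\<forall>k. \<exists>N. \<forall>n\<ge>N. \<forall>n'\<ge>N. s n - s n' \<in> mpow k)"

definition madic_separated :: "'a::ring_1 itself \<Rightarrow> bool" where
  "madic_separated _ \<longleftrightarrow> (\<Inter>k. mpow k) = {0::'a}"

definition madic_complete :: "'a::ring_1 itself \<Rightarrow> bool" where
  "madic_complete _ \<longleftrightarrow> (\<forall>s::nat \<Rightarrow> 'a. madic_cauchy s \<longrightarrow> (\<exists>L. madic_lim s L))"

text \<open>m-adically convergent infinite sum (meaningful when the limit exists; unique by separatedness).\<close>
definition msum :: "(nat \<Rightarrow> 'a::ring_1) \<Rightarrow> 'a" where
  "msum a = (THE S. madic_lim (\<lambda>N. \<Sum>i<N. a i) S)"

definition ring_automorphism :: "('a::ring_1 \<Rightarrow> 'a) \<Rightarrow> bool" where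
  "ring_automorphism \<sigma> \<longleftrightarrow> bij \<sigma> \<and> \<sigma> 1 = 1 \<and>
     (\<forall>x y. \<sigma> (x + y) = \<sigma> x + \<sigma> y) \<and> (\<forall>x y. \<sigma> (x * y) = \<sigma> x * \<sigma> y)"

definition sigma_derivation :: "('a::ring_1 \<Rightarrow> 'a) \<Rightarrow> ('a \<Rightarrow> 'a) \<Rightarrow> bool" where
  "sigma_derivation \<sigma> \<delta> \<longleftrightarrow> (\<forall>x y. \<delta> (x + y) = \<delta> x + \<delta> y) \<and>
     (\<forall>r s. \<delta> (r * s) = \<delta> r * s + \<sigma> r * \<delta> s)"

text \<open>xc s d i k r = coefficient of X^k in X^i r, computed from X r = s(r) X + d(r):
  X^(i+1) r = X (sum_k c_(i,k) X^k) = sum_k (s(c_(i,k)) X^(k+1) + d(c_(i,k)) X^k).\<close>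
fun xc :: "('a::ring_1 \<Rightarrow> 'a) \<Rightarrow> ('a \<Rightarrow> 'a) \<Rightarrow> nat \<Rightarrow> nat \<Rightarrow> 'a \<Rightarrow> 'a" where
  "xc \<sigma> \<delta> 0 k r = (if k = 0 then r else 0)"
| "xc \<sigma> \<delta> (Suc i) k r =
     (case k of 0 \<Rightarrow> 0 | Suc k' \<Rightarrow> \<sigma> (xc \<sigma> \<delta> i k' r)) + \<delta> (xc \<sigma> \<delta> i k r)"

text \<open>Multiplication in R[[X; s, d]]: (sum f_i X^i)(sum g_j X^j) has coefficient of X^n
  equal to sum_(j<=n) sum_i f_i c_(i,n-j)(g_j), the inner sum m-adically convergent.\<close>
definition skew_mult :: "('a::ring_1 \<Rightarrow> 'a) \<Rightarrow> ('a \<Rightarrow> 'a) \<Rightarrow> (nat \<Rightarrow> 'a) \<Rightarrow> (nat \<Rightarrow> 'a) \<Rightarrow> (nat \<Rightarrow> 'a)" where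
  "skew_mult \<sigma> \<delta> f g = (\<lambda>n. \<Sum>j\<le>n. msum (\<lambda>i. f i * xc \<sigma> \<delta> i (n - j) (g j)))"

definition skew_one :: "nat \<Rightarrow> 'a::ring_1" where
  "skew_one = (\<lambda>n. if n = 0 then 1 else 0)"

definition skew_unit :: "('a::ring_1 \<Rightarrow> 'a) \<Rightarrow> ('a \<Rightarrow> 'a) \<Rightarrow> (nat \<Rightarrow> 'a) \<Rightarrow> bool" where
  "skew_unit \<sigma> \<delta> e \<longleftrightarrow> (\<exists>g. skew_mult \<sigma> \<delta> e g = skew_one \<and> skew_mult \<sigma> \<delta> g e = skew_one)"

definition finite_red_ord :: "(nat \<Rightarrow> 'a::ring_1) \<Rightarrow> bool" where
  "finite_red_ord f \<longleftrightarrow> (\<exists>i. unit_r (f i))"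

definition distinguished :: "(nat \<Rightarrow> 'a::ring_1) \<Rightarrow> bool" where
  "distinguished F \<longleftrightarrow> (\<exists>s. F s = 1 \<and> (\<forall>i>s. F i = 0) \<and> (\<forall>i<s. F i \<in> mid))"

end

theory Submission
  imports Defs "HOL.Modules"
begin

text \<open>Let \<open>s\<close> be the reduced order of \<open>f\<close>. Then \<open>f = B + C X\<^sup>s\<close> where \<open>B\<close> is a polynomial of
  degree \<open>< s\<close> with coefficients in \<open>m\<close> and \<open>C\<close> is a unit, and finding a unit \<open>u\<close> for which
  \<open>u f\<close> is monic of degree \<open>s\<close> is a fixed point problem; because \<open>B\<close> has coefficients in \<open>m\<close>
  the map is a contraction for the \<open>m\<close>-adic topology on coefficients, so completeness and
  separatedness give exactly one such \<open>u\<close>, and \<open>f = u\<^sup>-\<^sup>1 (u f)\<close>. Any factorization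
  \<open>f = \<epsilon> F\<close> with \<open>F\<close> distinguished forces \<open>deg F = s\<close> (reduce modulo \<open>m\<close>), so \<open>\<epsilon>\<^sup>-\<^sup>1\<close> is that
  same \<open>u\<close>, which gives uniqueness.

  As \<open>\<delta>\<close> raises the \<open>m\<close>-adic
  filtration, the coefficient of \<open>X\<^sup>n\<close> in \<open>X\<^sup>i r\<close> lies in \<open>m\<^sup>i\<^sup>-\<^sup>n\<close>, so products converge; associativity and the
  invertibility of series with unit constant term follow by approximation arguments of the
  same kind.\<close>

lemma unit_r_one: "unit_r (1::'a::ring_1)"
  unfolding unit_r_def by auto

lemma unit_r_mult:
  fixes x y :: "'a::ring_1"
  assumes "unit_r x" and "unit_r y"
  shows "unit_r (x * y)"
proof -
  obtain a b where "x * a = 1" "a * x = 1" "y * b = 1" "b * y = 1"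
    using assms unfolding unit_r_def by blast
  then have "x * y * (b * a) = 1" and "b * a * (x * y) = 1"
    by (simp_all add: mult.assoc[symmetric]) (simp_all add: mult.assoc)
  then show ?thesis unfolding unit_r_def by blast
qed

lemma unit_r_of_products:
  fixes x y :: "'a::ring_1"
  assumes "unit_r (x * y)" and "unit_r (y * x)"
  shows "unit_r x"
proof -
  obtain a b where a: "x * y * a = 1" and b: "b * (y * x) = 1"
    using assms unfolding unit_r_def by blast
  have right: "x * (y * a) = 1" and left: "(b * y) * x = 1"
    using a b by (simp_all add: mult.assoc)
  have "b * y = (b * y) * (x * (y * a))" by (simp add: right)
  also have "\<dots> = y * a" by (simp add: mult.assoc[symmetric] left)
  finally show ?thesis using left right unfolding unit_r_def by auto
qed

section \<open>The \<open>m\<close>-adic filtration\<close>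

lemma mem_mpow_0 [simp]: "x \<in> mpow 0"
  unfolding mpow_def by (auto intro: in_mpow.intros)

lemma zero_mem_mpow [simp]: "0 \<in> mpow k"
  unfolding mpow_def by (cases k) (auto intro: in_mpow.intros)

lemma add_mem_mpow: "x \<in> mpow k \<Longrightarrow> y \<in> mpow k \<Longrightarrow> x + y \<in> mpow k"
  unfolding mpow_def by (cases k) (auto intro: in_mpow.intros)

lemma sum_mem_mpow: "(\<And>a. a \<in> A \<Longrightarrow> g a \<in> mpow k) \<Longrightarrow> sum g A \<in> mpow k"
  by (induction A rule: infinite_finite_induct) (auto intro: add_mem_mpow)

lemma mpow_antimono: "x \<in> mpow n \<Longrightarrow> m \<le> n \<Longrightarrow> x \<in> mpow m"
proof -
  have "in_mpow n x \<Longrightarrow> m \<le> n \<Longrightarrow> in_mpow m x" for m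
  proof (induction n x arbitrary: m rule: in_mpow.induct)
    case (mpow_prod a k b)
    then show ?case by (cases m) (auto intro: in_mpow.intros)
  next
    case (mpow_zero k)
    then show ?case by (cases m) (auto intro: in_mpow.intros)
  next
    case (mpow_add k x y)
    then show ?case by (cases m) (auto intro: in_mpow.intros)
  qed (auto intro: in_mpow.intros)
  then show "x \<in> mpow n \<Longrightarrow> m \<le> n \<Longrightarrow> x \<in> mpow m" unfolding mpow_def by auto
qed

lemma madic_lim_add:
  assumes "madic_lim s L" and "madic_lim t M"
  shows "madic_lim (\<lambda>n. s n + t n) (L + M)"
  unfolding madic_lim_def
proof
  fix k
  obtain N1 N2 where N1: "\<forall>n\<ge>N1. s n - L \<in> mpow k" and N2: "\<forall>n\<ge>N2. t n - M \<in> mpow k"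
    using assms unfolding madic_lim_def by meson
  have "s n + t n - (L + M) \<in> mpow k" if "max N1 N2 \<le> n" for n
  proof -
    have "s n - L \<in> mpow k" and "t n - M \<in> mpow k" using N1 N2 that by auto
    then have "(s n - L) + (t n - M) \<in> mpow k" by (rule add_mem_mpow)
    then show ?thesis by (simp add: algebra_simps)
  qed
  then show "\<exists>N. \<forall>n\<ge>N. s n + t n - (L + M) \<in> mpow k" by blast
qed

lemma madic_lim_eventually_const: "(\<And>n. N \<le> n \<Longrightarrow> s n = c) \<Longrightarrow> madic_lim s c"
  unfolding madic_lim_def by (intro allI exI[of _ N]) auto

definition madic_null :: "(nat \<Rightarrow> 'a::ring_1) \<Rightarrow> bool" where
  "madic_null a \<longleftrightarrow> (\<forall>k. \<exists>N. \<forall>i\<ge>N. a i \<in> mpow k)"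

lemma madic_null_if_mpow_index:
  assumes "\<And>i. a i \<in> mpow (i - c)"
  shows "madic_null a"
  unfolding madic_null_def
proof
  fix k
  have "a i \<in> mpow k" if "k + c \<le> i" for i
    using assms[of i] by (rule mpow_antimono) (use that in arith)
  then show "\<exists>N. \<forall>i\<ge>N. a i \<in> mpow k" by blast
qed

lemma madic_null_if_eventually_zero: "(\<And>i. M \<le> i \<Longrightarrow> a i = 0) \<Longrightarrow> madic_null a"
  unfolding madic_null_def by (metis zero_mem_mpow)

text \<open>The weight \<open>\<lambda>_. 0\<close> gives the \<open>m\<close>-adic topology on coefficients, the weight \<open>\<lambda>n. n\<close>
  the \<open>(m, X)\<close>-adic one; truncated subtraction makes the condition void when \<open>k \<le> w n\<close>.\<close>
definition coeff_cong :: "(nat \<Rightarrow> nat) \<Rightarrow> nat \<Rightarrow> (nat \<Rightarrow> 'a::ring_1) \<Rightarrow> (nat \<Rightarrow> 'a) \<Rightarrow> bool" where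
  "coeff_cong w k Z Z' \<longleftrightarrow> (\<forall>n. Z n - Z' n \<in> mpow (k - w n))"

abbreviation cong_m :: "nat \<Rightarrow> (nat \<Rightarrow> 'a::ring_1) \<Rightarrow> (nat \<Rightarrow> 'a) \<Rightarrow> bool" where
  "cong_m \<equiv> coeff_cong (\<lambda>_. 0)"

abbreviation cong_mX :: "nat \<Rightarrow> (nat \<Rightarrow> 'a::ring_1) \<Rightarrow> (nat \<Rightarrow> 'a) \<Rightarrow> bool" where
  "cong_mX \<equiv> coeff_cong (\<lambda>n. n)"

lemma coeff_cong_0 [simp]: "coeff_cong w 0 Z Z'"
  unfolding coeff_cong_def by simp

lemma coeff_cong_refl [simp]: "coeff_cong w k Z Z"
  unfolding coeff_cong_def by simp

lemma coeff_cong_antimono: "coeff_cong w k Z Z' \<Longrightarrow> j \<le> k \<Longrightarrow> coeff_cong w j Z Z'"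
  unfolding coeff_cong_def using mpow_antimono diff_le_mono by blast

lemma coeff_cong_trans: "coeff_cong w k Z Z' \<Longrightarrow> coeff_cong w k Z' Z'' \<Longrightarrow> coeff_cong w k Z Z''"
  unfolding coeff_cong_def using add_mem_mpow[of "Z n - Z' n" _ "Z' n - Z'' n" for n] by simp

locale madic_local_ring =
  assumes local_ring: "local_ring TYPE('a::ring_1)"
begin

lemma add_mem_mid: "x \<in> mid \<Longrightarrow> y \<in> mid \<Longrightarrow> x + y \<in> (mid::'a set)"
  using local_ring unfolding local_ring_def by auto

lemma mult_left_mem_mid: "x \<in> mid \<Longrightarrow> r * x \<in> (mid::'a set)"
  using local_ring unfolding local_ring_def by auto

lemma mult_right_mem_mid: "x \<in> mid \<Longrightarrow> x * r \<in> (mid::'a set)"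
  using local_ring unfolding local_ring_def by auto

lemma zero_mem_mid: "(0::'a) \<in> mid"
  using local_ring unfolding local_ring_def mid_def unit_r_def by auto

lemma uminus_mem_mid: "x \<in> mid \<Longrightarrow> - x \<in> (mid::'a set)"
  using mult_left_mem_mid[of x "-1"] by simp

lemma unit_r_add_mid: "unit_r (u::'a) \<Longrightarrow> x \<in> mid \<Longrightarrow> unit_r (u + x)"
  using add_mem_mid[of "u + x" "- x"] uminus_mem_mid unfolding mid_def by auto

lemma mult_left_mem_mpow: "(x::'a) \<in> mpow k \<Longrightarrow> r * x \<in> mpow k"
proof -
  have "in_mpow k (x::'a) \<Longrightarrow> in_mpow k (r * x)" for r
  proof (induction k x arbitrary: r rule: in_mpow.induct)
    case (mpow_prod a k b)
    then show ?case
      using in_mpow.mpow_prod[OF mult_left_mem_mid[OF mpow_prod(1), of r] mpow_prod(2)]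
      by (simp add: mult.assoc)
  qed (auto intro: in_mpow.intros simp: distrib_left)
  then show "x \<in> mpow k \<Longrightarrow> r * x \<in> mpow k" unfolding mpow_def by auto
qed

lemma mult_right_mem_mpow: "(x::'a) \<in> mpow k \<Longrightarrow> x * r \<in> mpow k"
proof -
  have "in_mpow k (x::'a) \<Longrightarrow> in_mpow k (x * r)" for r
  proof (induction k x arbitrary: r rule: in_mpow.induct)
    case (mpow_prod a k b)
    then show ?case
      using in_mpow.mpow_prod[OF mpow_prod(1) mpow_prod(3)[of r]] by (simp add: mult.assoc)
  qed (auto intro: in_mpow.intros simp: distrib_right)
  then show "x \<in> mpow k \<Longrightarrow> x * r \<in> mpow k" unfolding mpow_def by auto
qed

lemma uminus_mem_mpow: "(x::'a) \<in> mpow k \<Longrightarrow> - x \<in> mpow k"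
  using mult_left_mem_mpow[of x k "-1"] by simp

lemma diff_mem_mpow: "(x::'a) \<in> mpow k \<Longrightarrow> y \<in> mpow k \<Longrightarrow> x - y \<in> mpow k"
  by (metis diff_conv_add_uminus add_mem_mpow uminus_mem_mpow)

lemma mult_mem_mpow: "(x::'a) \<in> mpow a \<Longrightarrow> y \<in> mpow b \<Longrightarrow> x * y \<in> mpow (a + b)"
proof -
  have "in_mpow a (x::'a) \<Longrightarrow> y \<in> mpow b \<Longrightarrow> x * y \<in> mpow (a + b)"
  proof (induction a x rule: in_mpow.induct)
    case (mpow_0 x)
    then show ?case by (simp add: mult_left_mem_mpow)
  next
    case (mpow_prod a k b')
    then show ?case
      using in_mpow.mpow_prod[OF mpow_prod(1)] unfolding mpow_def by (simp add: mult.assoc)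
  next
    case (mpow_add k x y')
    then show ?case using add_mem_mpow[of "x * y" "Suc k + b" "y' * y"] by (simp add: distrib_right)
  qed simp
  then show "x \<in> mpow a \<Longrightarrow> y \<in> mpow b \<Longrightarrow> x * y \<in> mpow (a + b)" unfolding mpow_def by auto
qed

lemma mid_eq_mpow_1: "(mid::'a set) = mpow 1"
proof
  show "(mid::'a set) \<subseteq> mpow 1"
  proof
    fix x :: 'a
    assume "x \<in> mid"
    then have "in_mpow (Suc 0) (x * 1)" by (intro in_mpow.intros) auto
    then show "x \<in> mpow 1" unfolding mpow_def by simp
  qed
  have "in_mpow n x \<Longrightarrow> n \<ge> 1 \<Longrightarrow> x \<in> mid" for n and x :: 'a
    by (induction n x rule: in_mpow.induct) (auto simp: mult_right_mem_mid zero_mem_mid add_mem_mid)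
  then show "mpow 1 \<subseteq> (mid::'a set)" unfolding mpow_def by auto
qed

lemma madic_lim_mult_left: "madic_lim s (L::'a) \<Longrightarrow> madic_lim (\<lambda>n. r * s n) (r * L)"
  unfolding madic_lim_def right_diff_distrib[symmetric] by (meson mult_left_mem_mpow)

lemma madic_lim_diff:
  "madic_lim s (L::'a) \<Longrightarrow> madic_lim t M \<Longrightarrow> madic_lim (\<lambda>n. s n - t n) (L - M)"
  using madic_lim_add[of s L "\<lambda>n. - t n" "- M"] madic_lim_mult_left[of t M "-1"] by simp

lemma madic_lim_mpow_closed:
  assumes "madic_lim s (L::'a)" and "\<And>n. s n \<in> mpow k"
  shows "L \<in> mpow k"
proof -
  obtain N where "s N - L \<in> mpow k"
    using assms(1) unfolding madic_lim_def by blast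
  then have "s N - (s N - L) \<in> mpow k" using assms(2) by (rule diff_mem_mpow[rotated])
  then show ?thesis by simp
qed

lemma madic_cauchyI:
  assumes "\<And>k. \<exists>N. \<forall>n'\<ge>N. \<forall>n\<ge>n'. s n - s n' \<in> mpow k"
  shows "madic_cauchy (s::nat \<Rightarrow> 'a)"
  unfolding madic_cauchy_def
proof
  fix k
  obtain N where N: "\<forall>n'\<ge>N. \<forall>n\<ge>n'. s n - s n' \<in> mpow k"
    using assms by blast
  have "s n - s n' \<in> mpow k" if "N \<le> n" "N \<le> n'" for n n'
    using N that uminus_mem_mpow[of "s n' - s n" k] by (cases "n' \<le> n") auto
  then show "\<exists>N. \<forall>n\<ge>N. \<forall>n'\<ge>N. s n - s n' \<in> mpow k" by blast
qed

lemma coeff_cong_sym: "coeff_cong w k Z (Z'::nat \<Rightarrow> 'a) \<Longrightarrow> coeff_cong w k Z' Z"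
  unfolding coeff_cong_def by (metis minus_diff_eq uminus_mem_mpow)

end

locale complete_local_ring = madic_local_ring +
  assumes separated: "madic_separated TYPE('a::ring_1)"
    and complete: "madic_complete TYPE('a)"
begin

lemma eq_zero_if_mem_all_mpow: "(\<And>k. (x::'a) \<in> mpow k) \<Longrightarrow> x = 0"
  using separated unfolding madic_separated_def by blast

lemma madic_lim_unique: "madic_lim s (L::'a) \<Longrightarrow> madic_lim s L' \<Longrightarrow> L = L'"
proof -
  assume lims: "madic_lim s L" "madic_lim s L'"
  have "L' - L \<in> mpow k" for k
  proof -
    obtain N1 N2 where "\<forall>n\<ge>N1. s n - L \<in> mpow k" and "\<forall>n\<ge>N2. s n - L' \<in> mpow k"
      using lims unfolding madic_lim_def by blast
    then have "s (max N1 N2) - L \<in> mpow k" and "s (max N1 N2) - L' \<in> mpow k" by auto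
    then have "(s (max N1 N2) - L) - (s (max N1 N2) - L') \<in> mpow k" by (rule diff_mem_mpow)
    then show ?thesis by simp
  qed
  then show "L = L'" using eq_zero_if_mem_all_mpow by fastforce
qed

lemma msum_eqI: "madic_lim (\<lambda>N. \<Sum>i<N. a i) (L::'a) \<Longrightarrow> msum a = L"
  unfolding msum_def using madic_lim_unique by blast

lemma madic_null_sums: "madic_null (a::nat \<Rightarrow> 'a) \<Longrightarrow> madic_lim (\<lambda>N. \<Sum>i<N. a i) (msum a)"
proof -
  assume null: "madic_null a"
  have "madic_cauchy (\<lambda>N. \<Sum>i<N. a i)"
  proof (rule madic_cauchyI)
    fix k
    obtain N where N: "\<forall>i\<ge>N. a i \<in> mpow k" using null unfolding madic_null_def by blast
    have "(\<Sum>i<n. a i) - (\<Sum>i<n'. a i) \<in> mpow k" if "N \<le> n'" "n' \<le> n" for n n'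
      using that N by (simp add: lessThan_atLeast0 sum_diff_nat_ivl) (intro sum_mem_mpow, auto)
    then show "\<exists>N. \<forall>n'\<ge>N. \<forall>n\<ge>n'. (\<Sum>i<n. a i) - (\<Sum>i<n'. a i) \<in> mpow k" by blast
  qed
  then show ?thesis using complete msum_eqI unfolding madic_complete_def by blast
qed

lemma msum_add:
  "madic_null a \<Longrightarrow> madic_null b \<Longrightarrow> msum (\<lambda>i. a i + b i) = msum a + msum (b::nat \<Rightarrow> 'a)"
  by (rule msum_eqI) (simp add: sum.distrib madic_lim_add madic_null_sums)

lemma msum_diff:
  "madic_null a \<Longrightarrow> madic_null b \<Longrightarrow> msum (\<lambda>i. a i - b i) = msum a - msum (b::nat \<Rightarrow> 'a)"
  by (rule msum_eqI) (simp add: sum_subtractf madic_lim_diff madic_null_sums)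

lemma msum_sum:
  assumes "finite J" and "\<And>j. j \<in> J \<Longrightarrow> madic_null (a j)"
  shows "msum (\<lambda>i. \<Sum>j\<in>J. a j i) = (\<Sum>j\<in>J. msum (a j::nat \<Rightarrow> 'a))"
proof (rule msum_eqI)
  show "madic_lim (\<lambda>N. \<Sum>i<N. \<Sum>j\<in>J. a j i) (\<Sum>j\<in>J. msum (a j))"
    using assms
  proof (induction J rule: finite_induct)
    case (insert x F)
    then have "madic_lim (\<lambda>N. (\<Sum>i<N. a x i) + (\<Sum>i<N. \<Sum>j\<in>F. a j i))
        (msum (a x) + (\<Sum>j\<in>F. msum (a j)))"
      by (intro madic_lim_add madic_null_sums) auto
    then show ?case using insert by (simp add: sum.distrib)
  qed (simp add: madic_lim_eventually_const)
qed

lemma msum_mem_mpow: "madic_null a \<Longrightarrow> (\<And>i. a i \<in> mpow k) \<Longrightarrow> msum (a::nat \<Rightarrow> 'a) \<in> mpow k"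
  by (rule madic_lim_mpow_closed[OF madic_null_sums]) (auto intro: sum_mem_mpow)

lemma msum_eq_sum: "(\<And>i. M \<le> i \<Longrightarrow> a i = 0) \<Longrightarrow> msum a = (\<Sum>i<M. (a i::'a))"
  by (intro msum_eqI madic_lim_eventually_const[of M] sum.mono_neutral_right) auto

lemma msum_split_first:
  assumes "madic_null c"
  shows "msum c = c 0 + msum (\<lambda>i. if i = 0 then 0 else (c i::'a))"
proof -
  have "madic_null (\<lambda>i. if i = 0 then c 0 else 0)"
    by (rule madic_null_if_eventually_zero[of 1]) simp
  moreover have "madic_null (\<lambda>i. if i = 0 then 0 else c i)"
    using assms unfolding madic_null_def by (metis zero_mem_mpow)
  ultimately have "msum (\<lambda>i. (if i = 0 then c 0 else 0) + (if i = 0 then 0 else c i)) =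
      msum (\<lambda>i. if i = 0 then c 0 else 0) + msum (\<lambda>i. if i = 0 then 0 else c i)"
    by (rule msum_add)
  moreover have "msum (\<lambda>i. if i = 0 then c 0 else 0) = c 0"
    by (subst msum_eq_sum[of 1]) auto
  moreover have "(\<lambda>i. (if i = 0 then c 0 else 0) + (if i = 0 then 0 else c i)) = c"
    by auto
  ultimately show ?thesis by simp
qed

lemma coeff_cong_eq: "(\<And>k. coeff_cong w k Z (Z'::nat \<Rightarrow> 'a)) \<Longrightarrow> Z = Z'"
proof
  fix n
  assume "\<And>k. coeff_cong w k Z Z'"
  then have "Z n - Z' n \<in> mpow (k + w n - w n)" for k
    unfolding coeff_cong_def by blast
  then show "Z n = Z' n" using eq_zero_if_mem_all_mpow[of "Z n - Z' n"] by simp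
qed

lemma coeff_cong_limit:
  assumes cauchy: "\<And>k k'. k \<le> k' \<Longrightarrow> coeff_cong w k (Y k') (Y k :: nat \<Rightarrow> 'a)"
  obtains Z where "\<And>k. coeff_cong w k Z (Y k)"
proof -
  have "madic_cauchy (\<lambda>k. Y k n)" for n
  proof (rule madic_cauchyI)
    fix L
    have "Y k' n - Y k n \<in> mpow L" if "L + w n \<le> k" "k \<le> k'" for k k'
    proof -
      have "Y k' n - Y k n \<in> mpow (k - w n)"
        using cauchy[OF that(2)] unfolding coeff_cong_def by blast
      then show ?thesis by (rule mpow_antimono) (use that(1) in arith)
    qed
    then show "\<exists>N. \<forall>k\<ge>N. \<forall>k'\<ge>k. Y k' n - Y k n \<in> mpow L" by blast
  qed
  then have "\<exists>L. madic_lim (\<lambda>k. Y k n) L" for n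
    using complete unfolding madic_complete_def by blast
  then obtain Z where lim: "\<And>n. madic_lim (\<lambda>k. Y k n) (Z n)"
    by metis
  have "coeff_cong w k Z (Y k)" for k
    unfolding coeff_cong_def
  proof
    fix n
    obtain N where N: "\<forall>j\<ge>N. Y j n - Z n \<in> mpow (k - w n)"
      using lim[of n] unfolding madic_lim_def by blast
    have "Y (max N k) n - Y k n \<in> mpow (k - w n)"
      using cauchy[of k "max N k"] unfolding coeff_cong_def by simp
    moreover have "Y (max N k) n - Z n \<in> mpow (k - w n)"
      using N by simp
    ultimately have "(Y (max N k) n - Y k n) - (Y (max N k) n - Z n) \<in> mpow (k - w n)"
      by (rule diff_mem_mpow)
    then show "Z n - Y k n \<in> mpow (k - w n)" by simp
  qed
  then show ?thesis using that by blast
qed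

lemma contraction_ex1_fixpoint:
  assumes contraction: "\<And>k Z Z'. coeff_cong w k Z Z' \<Longrightarrow> coeff_cong w (Suc k) (\<Phi> Z) (\<Phi> (Z'::nat \<Rightarrow> 'a))"
  shows "\<exists>!Z. \<Phi> Z = Z"
proof -
  define Y where "Y k = (\<Phi> ^^ k) (\<lambda>_. 0)" for k
  have one_step: "coeff_cong w k (Y (Suc k)) (Y k)" for k
    by (induction k) (simp_all add: Y_def contraction)
  have far: "coeff_cong w k (Y k') (Y k)" if "k \<le> k'" for k k'
    using that
  proof (induction k' rule: dec_induct)
    case (step m)
    then show ?case using coeff_cong_trans coeff_cong_antimono[OF one_step[of m]] by blast
  qed simp
  obtain Z where Z: "\<And>k. coeff_cong w k Z (Y k)"
    using coeff_cong_limit[OF far] by metis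
  have "coeff_cong w (Suc k) (\<Phi> Z) Z" for k
    using contraction[OF Z[of k]] coeff_cong_sym[OF Z[of "Suc k"]] coeff_cong_trans
    unfolding Y_def by auto
  then have fixed: "\<Phi> Z = Z"
    using coeff_cong_eq coeff_cong_antimono le_SucI by blast
  have "Z' = Z" if "\<Phi> Z' = Z'" for Z'
  proof (rule coeff_cong_eq)
    show "coeff_cong w k Z' Z" for k
    proof (induction k)
      case (Suc k)
      then show ?case using contraction[OF Suc] that fixed by simp
    qed simp
  qed
  then show ?thesis using fixed by blast
qed

end

section \<open>Skew power series\<close>

definition X_mult :: "('a::ring_1 \<Rightarrow> 'a) \<Rightarrow> ('a \<Rightarrow> 'a) \<Rightarrow> (nat \<Rightarrow> 'a) \<Rightarrow> nat \<Rightarrow> 'a" where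
  "X_mult \<sigma> \<delta> h n = (case n of 0 \<Rightarrow> 0 | Suc n' \<Rightarrow> \<sigma> (h n')) + \<delta> (h n)"

definition X_power :: "nat \<Rightarrow> nat \<Rightarrow> 'a::ring_1" where
  "X_power k = (\<lambda>n. if n = k then 1 else 0)"

definition deg_less :: "nat \<Rightarrow> (nat \<Rightarrow> 'a::ring_1) \<Rightarrow> bool" where
  "deg_less M f \<longleftrightarrow> (\<forall>i\<ge>M. f i = 0)"

definition truncate :: "nat \<Rightarrow> (nat \<Rightarrow> 'a::ring_1) \<Rightarrow> nat \<Rightarrow> 'a" where
  "truncate M f = (\<lambda>i. if i < M then f i else 0)"

lemma skew_one_eq_X_power: "skew_one = X_power 0"
  unfolding skew_one_def X_power_def by simp

lemma deg_less_mono: "deg_less M f \<Longrightarrow> M \<le> M' \<Longrightarrow> deg_less M' f"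
  unfolding deg_less_def by auto

lemma deg_less_truncate: "deg_less M (truncate M f)"
  unfolding deg_less_def truncate_def by simp

lemma cong_mX_truncate: "cong_mX M f (truncate M f)"
  unfolding coeff_cong_def truncate_def by simp

locale skew_power_series = complete_local_ring +
  fixes \<sigma> \<delta> :: "'a::ring_1 \<Rightarrow> 'a"
  assumes automorphism: "ring_automorphism \<sigma>"
    and sigma_mid: "\<sigma> ` mid = mid"
    and derivation: "sigma_derivation \<sigma> \<delta>"
    and delta_range: "range \<delta> \<subseteq> mid"
    and delta_mid: "\<delta> ` mid \<subseteq> mpow 2"
begin

sublocale sigma: additive \<sigma>
  by unfold_locales (use automorphism in \<open>simp add: ring_automorphism_def\<close>)

sublocale delta: additive \<delta>
  by unfold_locales (use derivation in \<open>simp add: sigma_derivation_def\<close>)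

lemma sigma_mult: "\<sigma> (x * y) = \<sigma> x * \<sigma> y"
  using automorphism unfolding ring_automorphism_def by auto

lemma sigma_one: "\<sigma> 1 = 1"
  using automorphism unfolding ring_automorphism_def by auto

lemma delta_mult: "\<delta> (x * y) = \<delta> x * y + \<sigma> x * \<delta> y"
  using derivation unfolding sigma_derivation_def by auto

lemma delta_one: "\<delta> 1 = 0"
  using delta_mult[of 1 1] sigma_one by simp

lemma sigma_mem_mpow: "x \<in> mpow k \<Longrightarrow> \<sigma> x \<in> mpow k"
proof -
  have "in_mpow k x \<Longrightarrow> in_mpow k (\<sigma> x)"
  proof (induction k x rule: in_mpow.induct)
    case (mpow_prod a k b)
    have "\<sigma> a \<in> mid" using sigma_mid mpow_prod(1) by auto
    then show ?case using in_mpow.mpow_prod[OF _ mpow_prod(3)] by (simp add: sigma_mult)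
  qed (auto intro: in_mpow.intros simp: sigma.zero sigma.add)
  then show "x \<in> mpow k \<Longrightarrow> \<sigma> x \<in> mpow k" unfolding mpow_def by auto
qed

lemma delta_mem_mpow: "x \<in> mpow k \<Longrightarrow> \<delta> x \<in> mpow (Suc k)"
proof -
  have "in_mpow k x \<Longrightarrow> \<delta> x \<in> mpow (Suc k)"
  proof (induction k x rule: in_mpow.induct)
    case (mpow_0 x)
    then show ?case using delta_range mid_eq_mpow_1 by auto
  next
    case (mpow_prod a k b)
    have "\<delta> a \<in> mpow 2" using delta_mid mpow_prod(1) by auto
    then have "\<delta> a * b \<in> mpow (Suc (Suc k))"
      using mult_mem_mpow[of "\<delta> a" 2 b k] mpow_prod(2) unfolding mpow_def by simp
    moreover have "\<sigma> a * \<delta> b \<in> mpow (Suc (Suc k))"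
      using sigma_mid mpow_prod(1,3) unfolding mpow_def by (auto intro: in_mpow.intros)
    ultimately show ?case by (simp add: delta_mult add_mem_mpow)
  qed (simp_all add: delta.zero delta.add add_mem_mpow)
  then show "x \<in> mpow k \<Longrightarrow> \<delta> x \<in> mpow (Suc k)" unfolding mpow_def by auto
qed

abbreviation X_times :: "nat \<Rightarrow> (nat \<Rightarrow> 'a) \<Rightarrow> nat \<Rightarrow> 'a" where
  "X_times i \<equiv> X_mult \<sigma> \<delta> ^^ i"

abbreviation skew_times :: "(nat \<Rightarrow> 'a) \<Rightarrow> (nat \<Rightarrow> 'a) \<Rightarrow> nat \<Rightarrow> 'a" (infixl \<open>\<star>\<close> 70) where
  "f \<star> g \<equiv> skew_mult \<sigma> \<delta> f g"

lemma X_times_Suc_apply: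
  "X_times (Suc i) h n = (case n of 0 \<Rightarrow> 0 | Suc n' \<Rightarrow> \<sigma> (X_times i h n')) + \<delta> (X_times i h n)"
  by (simp add: X_mult_def)

lemma xc_mem_mpow: "r \<in> mpow v \<Longrightarrow> xc \<sigma> \<delta> i k r \<in> mpow (v + (i - k))"
proof (induction i arbitrary: k)
  case (Suc i)
  show ?case
  proof (cases k)
    case 0
    then show ?thesis using delta_mem_mpow[OF Suc.IH[OF Suc.prems, of 0]] by simp
  next
    case (Suc k')
    have "\<sigma> (xc \<sigma> \<delta> i k' r) \<in> mpow (v + (i - k'))"
      using sigma_mem_mpow Suc.IH Suc.prems by blast
    moreover have "\<delta> (xc \<sigma> \<delta> i k r) \<in> mpow (v + (i - k'))"
      by (rule mpow_antimono[OF delta_mem_mpow[OF Suc.IH[OF Suc.prems]]]) (use Suc in simp)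
    ultimately show ?thesis using Suc by (simp add: add_mem_mpow)
  qed
qed simp

lemma X_times_eq_sum_xc: "X_times i h n = (\<Sum>j\<le>n. xc \<sigma> \<delta> i (n - j) (h j))"
proof (induction i arbitrary: n)
  case 0
  have "(\<Sum>j\<le>n. xc \<sigma> \<delta> 0 (n - j) (h j)) = (\<Sum>j\<le>n. if j = n then h j else 0)"
    by (rule sum.cong) auto
  then show ?case by simp
next
  case (Suc i)
  have shifted: "(\<Sum>j\<le>n. (case n - j of 0 \<Rightarrow> 0 | Suc k \<Rightarrow> \<sigma> (xc \<sigma> \<delta> i k (h j)))) =
      (case n of 0 \<Rightarrow> 0 | Suc n' \<Rightarrow> \<sigma> (X_times i h n'))"
  proof (cases n)
    case (Suc n')
    have "(\<Sum>j\<le>n. (case n - j of 0 \<Rightarrow> 0 | Suc k \<Rightarrow> \<sigma> (xc \<sigma> \<delta> i k (h j)))) =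
        (\<Sum>j\<le>n'. (case Suc n' - j of 0 \<Rightarrow> 0 | Suc k \<Rightarrow> \<sigma> (xc \<sigma> \<delta> i k (h j))))"
      using Suc by (simp add: sum.atMost_Suc)
    also have "\<dots> = (\<Sum>j\<le>n'. \<sigma> (xc \<sigma> \<delta> i (n' - j) (h j)))"
      by (rule sum.cong) (auto simp: Suc_diff_le)
    also have "\<dots> = \<sigma> (X_times i h n')" by (simp add: Suc.IH sigma.sum)
    finally show ?thesis using Suc by simp
  qed simp
  show ?case
    unfolding X_times_Suc_apply xc.simps sum.distrib shifted
    by (simp add: Suc.IH delta.sum)
qed

lemma skew_mult_eq_msum: "(f \<star> g) n = msum (\<lambda>i. f i * X_times i g n)"
proof -
  have "(f \<star> g) n = (\<Sum>j\<le>n. msum (\<lambda>i. f i * xc \<sigma> \<delta> i (n - j) (g j)))"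
    unfolding skew_mult_def by simp
  also have "\<dots> = msum (\<lambda>i. \<Sum>j\<le>n. f i * xc \<sigma> \<delta> i (n - j) (g j))"
  proof (intro msum_sum[symmetric] madic_null_if_mpow_index[of _ n])
    fix i j
    have "xc \<sigma> \<delta> i (n - j) (g j) \<in> mpow (i - n)"
      using xc_mem_mpow[of "g j" 0 i "n - j"] by (simp add: mpow_antimono)
    then show "f i * xc \<sigma> \<delta> i (n - j) (g j) \<in> mpow (i - n)" by (rule mult_left_mem_mpow)
  qed simp
  also have "\<dots> = msum (\<lambda>i. f i * X_times i g n)"
    by (simp add: X_times_eq_sum_xc sum_distrib_left)
  finally show ?thesis .
qed

lemma X_mult_mem_mpow:
  assumes "\<And>j. h j \<in> mpow (v + (M - j))"
  shows "X_mult \<sigma> \<delta> h n \<in> mpow (v + (Suc M - n))"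
proof (cases n)
  case 0
  then show ?thesis using delta_mem_mpow[OF assms[of 0]] by (simp add: X_mult_def)
next
  case (Suc n')
  have "\<sigma> (h n') \<in> mpow (v + (M - n'))" using assms sigma_mem_mpow by blast
  moreover have "\<delta> (h n) \<in> mpow (v + (M - n'))"
    by (rule mpow_antimono[OF delta_mem_mpow[OF assms]]) (use Suc in simp)
  ultimately show ?thesis using Suc by (simp add: X_mult_def add_mem_mpow)
qed

lemma X_times_mem_mpow:
  assumes "\<And>j. h j \<in> mpow (v + (M - j))"
  shows "X_times i h n \<in> mpow (v + (M + i - n))"
proof (induction i arbitrary: n)
  case (Suc i)
  then show ?case using X_mult_mem_mpow[of "X_times i h" v "M + i" n] by simp
qed (simp add: assms)

lemma X_times_mem_mpow_index: "X_times i g n \<in> mpow (i - n)"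
  using X_times_mem_mpow[of g 0 0 i n] by simp

lemma madic_null_X_times: "madic_null (\<lambda>i. a i * X_times i g n)"
  by (rule madic_null_if_mpow_index[of _ n]) (simp add: mult_left_mem_mpow X_times_mem_mpow_index)

lemma X_times_add: "X_times i (\<lambda>n. h n + h' n) = (\<lambda>n. X_times i h n + X_times i h' n)"
proof (induction i)
  case (Suc i)
  then show ?case
    by (auto simp: X_mult_def sigma.add delta.add split: nat.split)
qed simp

lemma X_times_diff: "X_times i (\<lambda>n. h n - h' n) = (\<lambda>n. X_times i h n - X_times i h' n)"
proof (induction i)
  case (Suc i)
  then show ?case
    by (auto simp: X_mult_def sigma.diff delta.diff split: nat.split)
qed simp

lemma X_times_X_power: "X_times i (X_power k) = X_power (i + k)"
proof (induction i)
  case (Suc i)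
  then show ?case
    by (auto simp: X_mult_def X_power_def sigma_one sigma.zero delta_one delta.zero split: nat.split)
qed simp

lemma skew_mult_deg_less: "deg_less M f \<Longrightarrow> (f \<star> g) n = (\<Sum>i<M. f i * X_times i g n)"
  unfolding skew_mult_eq_msum deg_less_def by (rule msum_eq_sum) simp

lemma deg_less_X_times: "deg_less M h \<Longrightarrow> deg_less (M + i) (X_times i h)"
proof (induction i)
  case (Suc i)
  then show ?case
    unfolding deg_less_def X_mult_def by (auto simp: sigma.zero delta.zero split: nat.split)
qed simp

lemma deg_less_skew_mult:
  assumes f: "deg_less M f" and g: "deg_less M g"
  shows "deg_less (M + M) (f \<star> g)"
  unfolding deg_less_def
proof (intro allI impI)
  fix p
  assume "M + M \<le> p"
  then have "f i * X_times i g p = 0" if "i < M" for i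
    using deg_less_X_times[OF g, of i] that unfolding deg_less_def by simp
  then show "(f \<star> g) p = 0" by (simp add: skew_mult_deg_less[OF f])
qed

lemma X_mult_skew_mult_deg_less:
  assumes "deg_less M \<phi>"
  shows "X_mult \<sigma> \<delta> (\<phi> \<star> h) = X_mult \<sigma> \<delta> \<phi> \<star> h"
proof
  fix n
  let ?rhs = "(case n of 0 \<Rightarrow> 0 | Suc n' \<Rightarrow> (\<Sum>p<M. \<sigma> (\<phi> p) * \<sigma> (X_times p h n'))) +
      ((\<Sum>p<M. \<delta> (\<phi> p) * X_times p h n) + (\<Sum>p<M. \<sigma> (\<phi> p) * \<delta> (X_times p h n)))"
  have "\<phi> M = 0" using assms unfolding deg_less_def by simp
  have deg_X_phi: "deg_less (Suc M) (X_mult \<sigma> \<delta> \<phi>)"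
    using deg_less_X_times[OF assms, of 1] by simp
  have "X_mult \<sigma> \<delta> (\<phi> \<star> h) n = ?rhs"
    unfolding X_mult_def[of _ _ "\<phi> \<star> h"] skew_mult_deg_less[OF assms]
    by (simp add: sigma.sum delta.sum sigma_mult delta_mult sum.distrib del: funpow.simps
        split: nat.split)
  moreover have "(X_mult \<sigma> \<delta> \<phi> \<star> h) n = ?rhs"
  proof -
    have "(X_mult \<sigma> \<delta> \<phi> \<star> h) n = (\<Sum>p<Suc M. X_mult \<sigma> \<delta> \<phi> p * X_times p h n)"
      by (rule skew_mult_deg_less[OF deg_X_phi])
    also have "\<dots> = (\<Sum>p<Suc M. (case p of 0 \<Rightarrow> 0 | Suc p' \<Rightarrow> \<sigma> (\<phi> p')) * X_times p h n) +
        (\<Sum>p<Suc M. \<delta> (\<phi> p) * X_times p h n)"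
      by (simp add: X_mult_def distrib_right sum.distrib del: funpow.simps)
    also have "(\<Sum>p<Suc M. (case p of 0 \<Rightarrow> 0 | Suc p' \<Rightarrow> \<sigma> (\<phi> p')) * X_times p h n) =
        (\<Sum>p<M. \<sigma> (\<phi> p) * X_times (Suc p) h n)"
      by (simp only: sum.lessThan_Suc_shift) (simp del: funpow.simps)
    also have "(\<Sum>p<Suc M. \<delta> (\<phi> p) * X_times p h n) = (\<Sum>p<M. \<delta> (\<phi> p) * X_times p h n)"
      using \<open>\<phi> M = 0\<close> by (simp add: delta.zero)
    finally show ?thesis
      by (cases n) (simp_all add: X_times_Suc_apply distrib_left sum.distrib algebra_simps
          del: funpow.simps)
  qed
  ultimately show "X_mult \<sigma> \<delta> (\<phi> \<star> h) n = (X_mult \<sigma> \<delta> \<phi> \<star> h) n" by simp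
qed

lemma X_times_skew_mult_deg_less: "deg_less M \<phi> \<Longrightarrow> X_times i (\<phi> \<star> h) = X_times i \<phi> \<star> h"
proof (induction i)
  case (Suc i)
  then show ?case
    using X_mult_skew_mult_deg_less[OF deg_less_X_times[OF Suc.prems, of i]] by simp
qed simp

lemma skew_mult_assoc_deg_less:
  assumes f: "deg_less M f" and g: "deg_less M g"
  shows "f \<star> (g \<star> h) = f \<star> g \<star> h"
proof
  fix n
  have gi: "deg_less (M + M) (X_times i g)" if "i < M" for i
    using deg_less_mono[OF deg_less_X_times[OF g, of i]] that by simp
  have "(f \<star> (g \<star> h)) n = (\<Sum>i<M. f i * (\<Sum>p<M + M. X_times i g p * X_times p h n))"
    by (simp add: skew_mult_deg_less[OF f] X_times_skew_mult_deg_less[OF g]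
        skew_mult_deg_less[OF gi] del: funpow.simps)
  also have "\<dots> = (\<Sum>p<M + M. (\<Sum>i<M. f i * X_times i g p) * X_times p h n)"
    by (simp add: sum_distrib_left sum_distrib_right mult.assoc sum.swap[of _ "{..<M}"])
  also have "\<dots> = (f \<star> g \<star> h) n"
    by (simp add: skew_mult_deg_less[OF deg_less_skew_mult[OF f g]] skew_mult_deg_less[OF f]
        del: funpow.simps)
  finally show "(f \<star> (g \<star> h)) n = (f \<star> g \<star> h) n" .
qed

lemma skew_mult_diff_left: "(f \<star> g) n - (f' \<star> g) n = msum (\<lambda>i. (f i - f' i) * X_times i g n)"
  unfolding skew_mult_eq_msum left_diff_distrib
  by (rule msum_diff[OF madic_null_X_times madic_null_X_times, symmetric])

lemma skew_mult_diff_right: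
  "(f \<star> g) n - (f \<star> g') n = msum (\<lambda>i. f i * X_times i (\<lambda>j. g j - g' j) n)"
  unfolding skew_mult_eq_msum X_times_diff right_diff_distrib
  by (rule msum_diff[OF madic_null_X_times madic_null_X_times, symmetric])

lemma skew_mult_add_right: "(f \<star> (\<lambda>j. g j + g' j)) n = (f \<star> g) n + (f \<star> g') n"
  unfolding skew_mult_eq_msum X_times_add distrib_left
  by (rule msum_add[OF madic_null_X_times madic_null_X_times])

lemma cong_mX_skew_mult_left: "cong_mX M f f' \<Longrightarrow> cong_mX M (f \<star> g) (f' \<star> g)"
  unfolding coeff_cong_def
proof
  fix n
  assume f: "\<forall>n. f n - f' n \<in> mpow (M - n)"
  have "(f i - f' i) * X_times i g n \<in> mpow (M - n)" for i
  proof -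
    have "(f i - f' i) * X_times i g n \<in> mpow (M - i + (i - n))"
      using f X_times_mem_mpow_index by (blast intro: mult_mem_mpow)
    then show ?thesis by (rule mpow_antimono) simp
  qed
  then show "(f \<star> g) n - (f' \<star> g) n \<in> mpow (M - n)"
    unfolding skew_mult_diff_left by (intro msum_mem_mpow madic_null_X_times)
qed

lemma cong_mX_skew_mult_right: "cong_mX M g g' \<Longrightarrow> cong_mX M (f \<star> g) (f \<star> g')"
  unfolding coeff_cong_def
proof
  fix n
  assume g: "\<forall>n. g n - g' n \<in> mpow (M - n)"
  have "f i * X_times i (\<lambda>j. g j - g' j) n \<in> mpow (M - n)" for i
  proof -
    have "X_times i (\<lambda>j. g j - g' j) n \<in> mpow (0 + (M + i - n))"
      by (rule X_times_mem_mpow) (use g in simp)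
    then have "X_times i (\<lambda>j. g j - g' j) n \<in> mpow (M - n)"
      by (rule mpow_antimono) simp
    then show ?thesis by (rule mult_left_mem_mpow)
  qed
  then show "(f \<star> g) n - (f \<star> g') n \<in> mpow (M - n)"
    unfolding skew_mult_diff_right by (intro msum_mem_mpow madic_null_X_times)
qed

text \<open>Associativity holds for polynomials and passes to series because truncation at degree
  \<open>M\<close> changes a product only modulo \<open>(m, X)\<^sup>M\<close>.\<close>
lemma skew_mult_assoc: "f \<star> (g \<star> h) = f \<star> g \<star> h"
proof (rule coeff_cong_eq[of "\<lambda>n. n"])
  fix M
  let ?f = "truncate M f" and ?g = "truncate M g"
  have fg: "cong_mX M (f \<star> g) (?f \<star> ?g)"
    by (rule coeff_cong_trans[OF cong_mX_skew_mult_left cong_mX_skew_mult_right];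
        rule cong_mX_truncate)
  have "cong_mX M (f \<star> (g \<star> h)) (?f \<star> (?g \<star> h))"
    by (rule coeff_cong_trans[OF cong_mX_skew_mult_left cong_mX_skew_mult_right];
        intro cong_mX_truncate cong_mX_skew_mult_left)
  also have "?f \<star> (?g \<star> h) = ?f \<star> ?g \<star> h"
    by (rule skew_mult_assoc_deg_less[OF deg_less_truncate deg_less_truncate])
  finally show "cong_mX M (f \<star> (g \<star> h)) (f \<star> g \<star> h)"
    using coeff_cong_trans coeff_cong_sym[OF cong_mX_skew_mult_left[OF fg]] by blast
qed

lemma cong_m_skew_mult_left: "cong_m k Z Z' \<Longrightarrow> cong_m k (Z \<star> g) (Z' \<star> g)"
  unfolding coeff_cong_def skew_mult_diff_left
  by (auto intro!: msum_mem_mpow madic_null_X_times mult_right_mem_mpow)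

lemma cong_m_skew_mult_mid:
  assumes "cong_m k Z Z'" and "\<And>j. B j \<in> mid"
  shows "cong_m (Suc k) (Z \<star> B) (Z' \<star> B)"
  unfolding coeff_cong_def skew_mult_diff_left
proof (intro allI msum_mem_mpow madic_null_X_times)
  fix n i
  have "X_times i B n \<in> mpow (1 + (0 + i - n))"
    by (rule X_times_mem_mpow) (use assms(2) mid_eq_mpow_1 in simp)
  then have "X_times i B n \<in> mpow 1" by (rule mpow_antimono) simp
  moreover have "Z i - Z' i \<in> mpow k"
    using assms(1) unfolding coeff_cong_def by simp
  ultimately have "(Z i - Z' i) * X_times i B n \<in> mpow (k + 1)"
    by (intro mult_mem_mpow)
  then show "(Z i - Z' i) * X_times i B n \<in> mpow (Suc k - 0)" by simp
qed

lemma skew_mult_X_power: "(f \<star> X_power s) n = (if s \<le> n then f (n - s) else 0)"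
proof -
  have "(f \<star> X_power s) n = msum (\<lambda>i. f i * X_power (i + s) n)"
    by (simp add: skew_mult_eq_msum X_times_X_power)
  also have "\<dots> = (\<Sum>i<Suc n. f i * X_power (i + s) n)"
    by (rule msum_eq_sum) (simp add: X_power_def)
  also have "\<dots> = (\<Sum>i<Suc n. if i = n - s then (if s \<le> n then f i else 0) else 0)"
    by (rule sum.cong) (auto simp: X_power_def)
  finally show ?thesis by simp
qed

lemma skew_mult_one [simp]: "f \<star> skew_one = f"
  using skew_mult_X_power[of f 0] by (simp add: skew_one_eq_X_power fun_eq_iff)

lemma skew_one_mult [simp]: "skew_one \<star> g = g"
proof
  fix n
  have "deg_less 1 (skew_one :: nat \<Rightarrow> 'a)" unfolding deg_less_def skew_one_def by simp
  then show "(skew_one \<star> g) n = g n" by (simp add: skew_mult_deg_less skew_one_def)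
qed

lemma skew_mult_split_const:
  "(h \<star> g) n = h 0 * g n + ((\<lambda>i. if i = 0 then 0 else h i) \<star> g) n"
proof -
  have "(h \<star> g) n = h 0 * g n + msum (\<lambda>i. if i = 0 then 0 else h i * X_times i g n)"
    unfolding skew_mult_eq_msum by (subst msum_split_first[OF madic_null_X_times]) simp
  also have "(\<lambda>i. if i = 0 then 0 else h i * X_times i g n) =
      (\<lambda>i. (if i = 0 then 0 else h i) * X_times i g n)"
    by auto
  finally show ?thesis by (simp add: skew_mult_eq_msum)
qed

text \<open>Since \<open>\<delta>(R) \<subseteq> m\<close>, \<open>X\<^sup>i r \<equiv> \<sigma>\<^sup>i(r) X\<^sup>i\<close> modulo \<open>m\<close>; so for \<open>i \<ge> 1\<close> the coefficient of
  \<open>X\<^sup>n\<close> in \<open>X\<^sup>i f\<close> only involves coefficients of \<open>f\<close> below \<open>n\<close>.\<close>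
lemma skew_mult_coeff_mod_mid:
  assumes "\<And>j. j < n \<Longrightarrow> f j \<in> mid"
  shows "(u \<star> f) n - u 0 * f n \<in> mid"
proof -
  have "X_times i f n \<in> mpow 1" if "i \<noteq> 0" for i
    unfolding X_times_eq_sum_xc
  proof (rule sum_mem_mpow)
    fix j
    assume "j \<in> {..n}"
    then have "f j \<in> mpow (if j = n then 0 else 1)"
      using assms mid_eq_mpow_1 by auto
    then have "xc \<sigma> \<delta> i (n - j) (f j) \<in> mpow ((if j = n then 0 else 1) + (i - (n - j)))"
      by (rule xc_mem_mpow)
    then show "xc \<sigma> \<delta> i (n - j) (f j) \<in> mpow 1"
      by (rule mpow_antimono) (use that \<open>j \<in> {..n}\<close> in auto)
  qed
  then have "((\<lambda>i. if i = 0 then 0 else u i) \<star> f) n \<in> mpow 1"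
    unfolding skew_mult_eq_msum
    by (intro msum_mem_mpow madic_null_X_times) (simp add: mult_left_mem_mpow)
  then show ?thesis
    using skew_mult_split_const[of u f n] mid_eq_mpow_1 by simp
qed

lemma skew_mult_mem_mid:
  assumes "\<And>j. j \<le> n \<Longrightarrow> f j \<in> mid"
  shows "(u \<star> f) n \<in> mid"
proof -
  have "(u \<star> f) n - u 0 * f n \<in> mid"
    using assms by (intro skew_mult_coeff_mod_mid) simp
  moreover have "u 0 * f n \<in> mid"
    using assms by (simp add: mult_left_mem_mid)
  ultimately show ?thesis
    using add_mem_mid by fastforce
qed

lemma skew_inverse_unique: "b \<star> a = skew_one \<Longrightarrow> a \<star> c = skew_one \<Longrightarrow> b = c"
  by (metis skew_mult_assoc skew_mult_one skew_one_mult)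

lemma unit_r_const_if_right_inverse: "h \<star> g = skew_one \<Longrightarrow> unit_r (h 0 * g 0)"
  using unit_r_add_mid[OF unit_r_one uminus_mem_mid[OF skew_mult_coeff_mod_mid[of 0 g h]]]
  by (simp add: skew_one_def)

text \<open>The right inverse is a fixed point of \<open>g \<mapsto> h\<^sub>0\<^sup>-\<^sup>1 (1 - N g)\<close> with \<open>N = h - h\<^sub>0\<close>;
  since \<open>N\<close> has no constant term this map is a contraction for the \<open>(m, X)\<close>-adic topology.\<close>
lemma right_inverse_exists:
  assumes "unit_r (h 0)"
  obtains g where "h \<star> g = skew_one"
proof -
  obtain c where c: "h 0 * c = 1"
    using assms unfolding unit_r_def by blast
  define N where "N = (\<lambda>i. if i = 0 then 0 else h i)"
  define \<Phi> where "\<Phi> g = (\<lambda>n. c * (skew_one n - (N \<star> g) n))" for g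
  have "cong_mX (Suc M) (\<Phi> g) (\<Phi> g')" if "cong_mX M g g'" for M g g'
    unfolding coeff_cong_def
  proof
    fix n
    have "N i * X_times i (\<lambda>j. g j - g' j) n \<in> mpow (Suc M - n)" for i
    proof (cases "i = 0")
      case False
      have "X_times i (\<lambda>j. g j - g' j) n \<in> mpow (0 + (M + i - n))"
        by (rule X_times_mem_mpow) (use that in \<open>simp add: coeff_cong_def\<close>)
      then have "X_times i (\<lambda>j. g j - g' j) n \<in> mpow (Suc M - n)"
        by (rule mpow_antimono) (use False in simp)
      then show ?thesis by (rule mult_left_mem_mpow)
    qed (simp add: N_def)
    then have "(N \<star> g) n - (N \<star> g') n \<in> mpow (Suc M - n)"
      unfolding skew_mult_diff_right by (intro msum_mem_mpow madic_null_X_times)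
    then have "- (c * ((N \<star> g) n - (N \<star> g') n)) \<in> mpow (Suc M - n)"
      by (intro uminus_mem_mpow mult_left_mem_mpow)
    then show "\<Phi> g n - \<Phi> g' n \<in> mpow (Suc M - n)"
      unfolding \<Phi>_def by (simp add: algebra_simps)
  qed
  then obtain g where g: "\<Phi> g = g"
    using contraction_ex1_fixpoint[of "\<lambda>n. n" \<Phi>] by blast
  have "(h \<star> g) n = skew_one n" for n
  proof -
    have "(h \<star> g) n = h 0 * g n + (N \<star> g) n"
      unfolding N_def by (rule skew_mult_split_const)
    also have "h 0 * g n = h 0 * c * (skew_one n - (N \<star> g) n)"
      by (subst g[symmetric]) (simp add: \<Phi>_def mult.assoc)
    finally show ?thesis using c by simp
  qed
  then show ?thesis using that by blast
qed

lemma skew_unit_iff_unit_r: "skew_unit \<sigma> \<delta> h \<longleftrightarrow> unit_r (h 0)"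
proof
  assume "skew_unit \<sigma> \<delta> h"
  then obtain g where "h \<star> g = skew_one" and "g \<star> h = skew_one"
    unfolding skew_unit_def by blast
  then show "unit_r (h 0)"
    using unit_r_of_products unit_r_const_if_right_inverse by blast
next
  assume h0: "unit_r (h 0)"
  obtain g where g: "h \<star> g = skew_one" using h0 by (rule right_inverse_exists)
  obtain c where "c * h 0 = 1" and "h 0 * c = 1"
    using h0 unfolding unit_r_def by blast
  then have "unit_r (c * (h 0 * g 0))"
    using unit_r_mult unit_r_const_if_right_inverse[OF g] unfolding unit_r_def by blast
  then have "unit_r (g 0)"
    using \<open>c * h 0 = 1\<close> by (simp add: mult.assoc[symmetric])
  then obtain k where "g \<star> k = skew_one" by (rule right_inverse_exists)
  then have "g \<star> h = skew_one"
    using skew_inverse_unique[OF g] by simp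
  then show "skew_unit \<sigma> \<delta> h"
    unfolding skew_unit_def using g by blast
qed

lemma skew_unit_mult:
  assumes "skew_unit \<sigma> \<delta> a" and "skew_unit \<sigma> \<delta> b"
  shows "skew_unit \<sigma> \<delta> (a \<star> b)"
proof -
  have "unit_r (a 0 * b 0)"
    using assms unfolding skew_unit_iff_unit_r by (rule unit_r_mult)
  moreover have "(a \<star> b) 0 - a 0 * b 0 \<in> mid"
    by (rule skew_mult_coeff_mod_mid) simp
  ultimately have "unit_r (a 0 * b 0 + ((a \<star> b) 0 - a 0 * b 0))"
    by (rule unit_r_add_mid)
  then show ?thesis unfolding skew_unit_iff_unit_r by simp
qed

end

section \<open>Weierstrass preparation\<close>

definition red_ord :: "(nat \<Rightarrow> 'a::ring_1) \<Rightarrow> nat" where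
  "red_ord f = (LEAST i. unit_r (f i))"

lemma unit_r_red_ord: "finite_red_ord f \<Longrightarrow> unit_r (f (red_ord f))"
  unfolding finite_red_ord_def red_ord_def by (rule LeastI_ex)

lemma mid_below_red_ord: "i < red_ord f \<Longrightarrow> f i \<in> mid"
  unfolding red_ord_def mid_def using not_less_Least by blast

lemma red_ord_eqI: "unit_r (f s) \<Longrightarrow> (\<And>i. i < s \<Longrightarrow> f i \<in> mid) \<Longrightarrow> red_ord f = s"
  unfolding red_ord_def mid_def by (rule Least_equality) (auto simp: not_less[symmetric])

definition monic_of_degree :: "nat \<Rightarrow> (nat \<Rightarrow> 'a::ring_1) \<Rightarrow> bool" where
  "monic_of_degree s F \<longleftrightarrow> (\<forall>i. F (i + s) = skew_one i)"

lemma distinguished_iff: "distinguished F \<longleftrightarrow> (\<exists>s. monic_of_degree s F \<and> (\<forall>i<s. F i \<in> mid))"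
proof -
  have "monic_of_degree s F \<longleftrightarrow> F s = 1 \<and> (\<forall>i>s. F i = 0)" for s
  proof -
    have "(\<forall>i. F (i + s) = skew_one i) \<longleftrightarrow> (\<forall>i\<ge>s. F i = skew_one (i - s))"
      by (metis add_diff_cancel_right' le_add2 le_add_diff_inverse2)
    then show ?thesis
      unfolding monic_of_degree_def skew_one_def by (auto simp: le_less)
  qed
  then show ?thesis unfolding distinguished_def by blast
qed

context skew_power_series
begin

lemma skew_mult_truncate_shift:
  "(u \<star> f) (i + s) = (u \<star> truncate s f) (i + s) + (u \<star> (\<lambda>j. f (j + s))) i"
proof -
  let ?C = "\<lambda>j. f (j + s)"
  have f: "f = (\<lambda>n. truncate s f n + (?C \<star> X_power s) n)"
    by (auto simp: skew_mult_X_power truncate_def)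
  have "(u \<star> f) (i + s) = (u \<star> truncate s f) (i + s) + (u \<star> (?C \<star> X_power s)) (i + s)"
    by (subst f) (rule skew_mult_add_right)
  also have "u \<star> (?C \<star> X_power s) = u \<star> ?C \<star> X_power s"
    by (rule skew_mult_assoc)
  finally show ?thesis by (simp add: skew_mult_X_power)
qed

text \<open>Writing \<open>s = ord\<^sup>r\<^sup>e\<^sup>d f\<close>, this is the splitting \<open>f = B + C X\<^sup>s\<close> with \<open>B\<close> a polynomial
  over \<open>m\<close> and \<open>C\<close> a unit.\<close>
lemma red_ord_splitting:
  assumes "finite_red_ord f"
  obtains B C where "\<And>j. B j \<in> mid" and "skew_unit \<sigma> \<delta> C"
    and "\<And>u i. (u \<star> f) (i + red_ord f) = (u \<star> B) (i + red_ord f) + (u \<star> C) i"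
proof
  show "truncate (red_ord f) f j \<in> mid" for j
    using mid_below_red_ord[of j f] zero_mem_mid by (simp add: truncate_def)
  show "skew_unit \<sigma> \<delta> (\<lambda>j. f (j + red_ord f))"
    using unit_r_red_ord[OF assms] by (simp add: skew_unit_iff_unit_r)
qed (rule skew_mult_truncate_shift)

text \<open>With \<open>Z = u C\<close>, the condition on \<open>u\<close> becomes the fixed point equation
  \<open>Z = 1 - (Z C\<^sup>-\<^sup>1 B)\<close> shifted down by \<open>s\<close>, a contraction because \<open>B\<close> has coefficients in \<open>m\<close>.\<close>
lemma ex1_monic_multiplier:
  assumes "finite_red_ord f"
  shows "\<exists>!u. monic_of_degree (red_ord f) (u \<star> f)"
proof -
  define s where "s = red_ord f"
  obtain B C where B: "\<And>j. B j \<in> mid" and "skew_unit \<sigma> \<delta> C"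
    and split: "\<And>u i. (u \<star> f) (i + s) = (u \<star> B) (i + s) + (u \<star> C) i"
    using red_ord_splitting[OF assms] unfolding s_def by metis
  then obtain C' where C': "C \<star> C' = skew_one" "C' \<star> C = skew_one"
    unfolding skew_unit_def by blast
  define \<Phi> where "\<Phi> Z = (\<lambda>i. skew_one i - (Z \<star> C' \<star> B) (i + s))" for Z
  have monic_iff_fixed: "monic_of_degree s (u \<star> f) \<longleftrightarrow> \<Phi> (u \<star> C) = u \<star> C" for u
  proof -
    have inverse: "u \<star> C \<star> C' = u" by (simp add: C' flip: skew_mult_assoc)
    show ?thesis
      unfolding monic_of_degree_def \<Phi>_def inverse fun_eq_iff split by (auto simp: algebra_simps)
  qed
  have "\<exists>!Z. \<Phi> Z = Z"
  proof (rule contraction_ex1_fixpoint)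
    fix k and Z Z' :: "nat \<Rightarrow> 'a"
    assume "cong_m k Z Z'"
    then have "cong_m (Suc k) (Z \<star> C' \<star> B) (Z' \<star> C' \<star> B)"
      by (intro cong_m_skew_mult_mid cong_m_skew_mult_left B)
    then have "cong_m (Suc k) (\<lambda>i. (Z' \<star> C' \<star> B) (i + s)) (\<lambda>i. (Z \<star> C' \<star> B) (i + s))"
      unfolding coeff_cong_def using uminus_mem_mpow by (metis minus_diff_eq)
    then show "cong_m (Suc k) (\<Phi> Z) (\<Phi> Z')"
      unfolding coeff_cong_def \<Phi>_def by simp
  qed
  then obtain Z where Z: "\<Phi> Z = Z" and unique: "\<And>Z'. \<Phi> Z' = Z' \<Longrightarrow> Z' = Z"
    by blast
  have "Z \<star> C' \<star> C = Z" by (simp add: C' flip: skew_mult_assoc)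
  then have "monic_of_degree s (Z \<star> C' \<star> f)"
    using Z monic_iff_fixed by simp
  moreover have "u = Z \<star> C'" if "monic_of_degree s (u \<star> f)" for u
  proof -
    have "u \<star> C = Z" using that monic_iff_fixed unique by blast
    then show ?thesis by (metis C'(1) skew_mult_assoc skew_mult_one)
  qed
  ultimately show ?thesis unfolding s_def by blast
qed

lemma skew_unit_if_monic_multiplier:
  assumes "finite_red_ord f" and monic: "monic_of_degree (red_ord f) (u \<star> f)"
  shows "skew_unit \<sigma> \<delta> u"
proof -
  obtain B C where B: "\<And>j. B j \<in> mid" and C: "skew_unit \<sigma> \<delta> C"
    and split: "\<And>u i. (u \<star> f) (i + red_ord f) = (u \<star> B) (i + red_ord f) + (u \<star> C) i"
    using red_ord_splitting[OF assms(1)] by metis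
  obtain C' where C': "C \<star> C' = skew_one" "C' \<star> C = skew_one"
    using C unfolding skew_unit_def by blast
  have "(u \<star> B) (red_ord f) + (u \<star> C) 0 = 1"
    using monic split[of u 0] unfolding monic_of_degree_def skew_one_def by (metis add_0)
  moreover have "(u \<star> B) (red_ord f) \<in> mid"
    using B by (rule skew_mult_mem_mid)
  ultimately have "unit_r ((u \<star> C) 0)"
    using unit_r_add_mid[OF unit_r_one uminus_mem_mid] by (metis add_diff_cancel_left' diff_conv_add_uminus)
  then have "skew_unit \<sigma> \<delta> (u \<star> C \<star> C')"
    using C' skew_unit_mult unfolding skew_unit_iff_unit_r[symmetric] skew_unit_def by blast
  then show ?thesis by (simp add: C' flip: skew_mult_assoc)
qed

lemma red_ord_skew_mult_distinguished:
  assumes "skew_unit \<sigma> \<delta> \<epsilon>" and "monic_of_degree s F" and "\<And>i. i < s \<Longrightarrow> F i \<in> mid"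
  shows "finite_red_ord (\<epsilon> \<star> F)" and "red_ord (\<epsilon> \<star> F) = s"
proof -
  have "F s = 1"
    using assms(2) unfolding monic_of_degree_def skew_one_def by (metis add_0)
  then have "(\<epsilon> \<star> F) s - \<epsilon> 0 \<in> mid"
    using skew_mult_coeff_mod_mid[of s F \<epsilon>] assms(3) by simp
  then have "unit_r (\<epsilon> 0 + ((\<epsilon> \<star> F) s - \<epsilon> 0))"
    using assms(1) unfolding skew_unit_iff_unit_r by (rule unit_r_add_mid[rotated])
  then have unit: "unit_r ((\<epsilon> \<star> F) s)" by simp
  then show "finite_red_ord (\<epsilon> \<star> F)"
    unfolding finite_red_ord_def by blast
  show "red_ord (\<epsilon> \<star> F) = s"
    using unit assms(3) by (intro red_ord_eqI skew_mult_mem_mid) auto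
qed

lemma weierstrass_existence:
  assumes "finite_red_ord f"
  obtains \<epsilon> F where "skew_unit \<sigma> \<delta> \<epsilon>" and "distinguished F" and "f = \<epsilon> \<star> F"
proof -
  obtain u where u: "monic_of_degree (red_ord f) (u \<star> f)"
    using ex1_monic_multiplier[OF assms] by blast
  then obtain \<epsilon> where \<epsilon>: "u \<star> \<epsilon> = skew_one" "\<epsilon> \<star> u = skew_one"
    using skew_unit_if_monic_multiplier[OF assms] unfolding skew_unit_def by blast
  have "distinguished (u \<star> f)"
    unfolding distinguished_iff
  proof (intro exI conjI allI impI)
    show "monic_of_degree (red_ord f) (u \<star> f)" by (rule u)
    show "(u \<star> f) i \<in> mid" if "i < red_ord f" for i
      using that by (intro skew_mult_mem_mid mid_below_red_ord) simp
  qed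
  moreover have "f = \<epsilon> \<star> (u \<star> f)"
    by (simp add: skew_mult_assoc \<epsilon>)
  moreover have "skew_unit \<sigma> \<delta> \<epsilon>"
    unfolding skew_unit_def using \<epsilon> by blast
  ultimately show ?thesis using that by blast
qed

lemma weierstrass_uniqueness:
  assumes "skew_unit \<sigma> \<delta> \<epsilon>" and "distinguished F"
    and "skew_unit \<sigma> \<delta> \<epsilon>'" and "distinguished F'"
    and eq: "\<epsilon>' \<star> F' = \<epsilon> \<star> F"
  shows "\<epsilon>' = \<epsilon> \<and> F' = F"
proof -
  obtain s where F: "monic_of_degree s F" "\<And>i. i < s \<Longrightarrow> F i \<in> mid"
    using assms(2) unfolding distinguished_iff by blast
  obtain s' where F': "monic_of_degree s' F'" "\<And>i. i < s' \<Longrightarrow> F' i \<in> mid"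
    using assms(4) unfolding distinguished_iff by blast
  have ord: "finite_red_ord (\<epsilon> \<star> F)" and "red_ord (\<epsilon> \<star> F) = s"
    using red_ord_skew_mult_distinguished[OF assms(1) F] by blast+
  moreover have "red_ord (\<epsilon> \<star> F) = s'"
    using red_ord_skew_mult_distinguished(2)[OF assms(3) F'] by (simp add: eq)
  ultimately have "s' = s" by simp
  obtain u where u: "u \<star> \<epsilon> = skew_one" "\<epsilon> \<star> u = skew_one"
    using assms(1) unfolding skew_unit_def by blast
  obtain u' where u': "u' \<star> \<epsilon>' = skew_one" "\<epsilon>' \<star> u' = skew_one"
    using assms(3) unfolding skew_unit_def by blast
  have uF: "u \<star> (\<epsilon> \<star> F) = F"
    by (simp add: skew_mult_assoc u)
  have uF': "u' \<star> (\<epsilon> \<star> F) = F'"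
    by (simp add: skew_mult_assoc u' flip: eq)
  have "monic_of_degree (red_ord (\<epsilon> \<star> F)) (u \<star> (\<epsilon> \<star> F))"
    and "monic_of_degree (red_ord (\<epsilon> \<star> F)) (u' \<star> (\<epsilon> \<star> F))"
    using F(1) F'(1) \<open>s' = s\<close> \<open>red_ord (\<epsilon> \<star> F) = s\<close> by (simp_all add: uF uF')
  then have "u' = u"
    using ex1_monic_multiplier[OF ord] by blast
  then show ?thesis
    using uF uF' skew_inverse_unique[OF u(2)] u'(1) by simp
qed

end

theorem mainTheorem6:
  fixes \<sigma> \<delta> :: "'a::ring_1 \<Rightarrow> 'a" and f :: "nat \<Rightarrow> 'a"
  assumes "local_ring TYPE('a)"
    and "madic_separated TYPE('a)"
    and "madic_complete TYPE('a)"
    and "ring_automorphism \<sigma>"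
    and "\<sigma> ` mid = mid"
    and "sigma_derivation \<sigma> \<delta>"
    and "range \<delta> \<subseteq> mid"
    and "\<delta> ` mid \<subseteq> mpow 2"
    and "finite_red_ord f"
  shows "\<exists>\<epsilon> F. skew_unit \<sigma> \<delta> \<epsilon> \<and> distinguished F \<and> f = skew_mult \<sigma> \<delta> \<epsilon> F \<and>
           (\<forall>\<epsilon>' F'. skew_unit \<sigma> \<delta> \<epsilon>' \<and> distinguished F' \<and> f = skew_mult \<sigma> \<delta> \<epsilon>' F'
              \<longrightarrow> \<epsilon>' = \<epsilon> \<and> F' = F)"
proof -
  interpret skew_power_series \<sigma> \<delta>
    using assms(1-8) by unfold_locales
  obtain \<epsilon> F where "skew_unit \<sigma> \<delta> \<epsilon>" and "distinguished F" and "f = \<epsilon> \<star> F"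
    using weierstrass_existence[OF assms(9)] .
  then show ?thesis
    using weierstrass_uniqueness by blast
qed

end
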